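(* Let $n\in\mathbb{N}$ and $1\le t\le 2^n$. Let $T$ be a uniformly random subset of $\mathbb{F}_2^n$ of size $|T|=t$, and let $k$ be a uniformly random element of $T$. For $0\le d\le n$ let $\#_d(k)=|\{z\in T:d_H(z,k)=d\}|$, with $d_H$ the Hamming distance. Then for all integers $x$, $$P(\#_d(k)=x)=\begin{cases}1 & d=0\wedge x=1,\\ 0 & d=0\wedge x\ne1,\\ \mathrm{hypgeom}(\mathbf X,\mathbf x) & \text{otherwise},\end{cases}$$ with $\mathbf X=\left(\binom nd,\,2^n-1-\binom nd\right)$ and $\mathbf x=(x,\,|T|-1-x)$. Moreover, for $0\le d_1,d_2\le n$ and integers $x_1,x_2$, $$P(\#_{d_1}(k)=x_1,\#_{d_2}(k)=x_2)=\begin{cases}P(\#_{d_1}(k)=x_1)P(\#_{d_2}(k)=x_2) & d_1=0\vee d_2=0,\\ P(\#_{d_1}(k)=x_1) & d_1=d_2\wedge x_1=x_2,\\ 0 & d_1=d_2\wedge x_1\ne x_2,\\ \mathrm{hypgeom}(\mathbf X,\mathbf x) & \text{otherwise},\end{cases}$$ with $\mathbf X=\left(\binom n{d_1},\binom n{d_2},\,2^n-1-\binom n{d_1}-\binom n{d_2}\right)$ and $\mathbf x=(x_1,x_2,\,|T|-1-x_1-x_2)$.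
   Context: $\mathrm{hypgeom}(\mathbf X,\mathbf x)$ is the multivariate hypergeometric probability: for an urn with $X_i$ balls of colour $i$ ($i=1,\dots,m$), $N=\sum_iX_i$, drawing $s=\sum_ix_i$ balls without replacement, the probability of obtaining exactly $x_i$ balls of colour $i$ for all $i$ is $\prod_{i=1}^m\binom{X_i}{x_i}\big/\binom{N}{s}$ (taken to be $0$ when some $x_i<0$). *)

theory Defs
  imports "HOL-Probability.Probability"
begin

(* F_2^n is modelled as the set of boolean lists of length n. *)
definition cube :: "nat \<Rightarrow> bool list set" where
  "cube n = {v. length v = n}"

definition hamming :: "bool list \<Rightarrow> bool list \<Rightarrow> nat" where
  "hamming z k = card {i. i < length z \<and> z ! i \<noteq> k ! i}"

definition hypgeom :: "int list \<Rightarrow> int list \<Rightarrow> real" where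
  "hypgeom X x =
     (if (\<exists>i<length x. x ! i < 0) then 0
      else (\<Prod>i<length X. real (nat (X ! i) choose nat (x ! i)))
           / real (nat (sum_list X) choose nat (sum_list x)))"

definition rand_exp :: "nat \<Rightarrow> nat \<Rightarrow> (bool list set \<times> bool list) pmf" where
  "rand_exp n t =
     bind_pmf (pmf_of_set {T. T \<subseteq> cube n \<and> card T = t})
       (\<lambda>T. map_pmf (\<lambda>k. (T, k)) (pmf_of_set T))"

definition cnt :: "bool list set \<Rightarrow> bool list \<Rightarrow> nat \<Rightarrow> nat" where
  "cnt T k d = card {z \<in> T. hamming z k = d}"

definition P1 :: "nat \<Rightarrow> nat \<Rightarrow> nat \<Rightarrow> int \<Rightarrow> real" where
  "P1 n t d x = measure_pmf.prob (rand_exp n t) {(T, k). int (cnt T k d) = x}"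

definition P2 :: "nat \<Rightarrow> nat \<Rightarrow> nat \<Rightarrow> int \<Rightarrow> nat \<Rightarrow> int \<Rightarrow> real" where
  "P2 n t d1 x1 d2 x2 = measure_pmf.prob (rand_exp n t)
      {(T, k). int (cnt T k d1) = x1 \<and> int (cnt T k d2) = x2}"

end

theory Submission
  imports Defs
begin

(*
  Choosing a uniform t-subset T and then a uniform point k of T is the same as choosing the
  pointed set (T, k) uniformly; rerooting at k, this is a uniform k followed by a uniform
  (t - 1)-subset T - {k} of the remaining 2^n - 1 points.  For d > 0 the Hamming spheres of
  radius d around k are pairwise disjoint subsets of F_2^n - {k} of size (n choose d), so the
  counts #_d(k) record how many of the t - 1 draws land in fixed disjoint sets of known sizes:
  a multivariate hypergeometric law.  The sphere of radius 0 is {k}, so #_0(k) = 1 always.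
*)

lemma finite_cube: "finite (cube n)"
  and card_cube: "card (cube n) = 2 ^ n"
proof -
  have "cube n = {xs. set xs \<subseteq> (UNIV :: bool set) \<and> length xs = n}"
    by (auto simp: cube_def)
  then show "finite (cube n)" "card (cube n) = 2 ^ n"
    using finite_lists_length_eq[of "UNIV :: bool set" n] card_lists_length_eq[of "UNIV :: bool set" n]
    by simp_all
qed

definition pointed_subsets :: "'a set \<Rightarrow> nat \<Rightarrow> ('a set \<times> 'a) set" where
  "pointed_subsets U t = {(T, k). T \<subseteq> U \<and> card T = t \<and> k \<in> T}"

lemma pointed_subsets_eq_Sigma:
  "pointed_subsets U t = (SIGMA T:{T. T \<subseteq> U \<and> card T = t}. T)"
  by (auto simp: pointed_subsets_def)

lemma finite_subsets_of_card: "finite U \<Longrightarrow> finite {T. T \<subseteq> U \<and> card T = t}"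
  by (rule rev_finite_subset[of "Pow U"]) auto

lemma finite_pointed_subsets: "finite U \<Longrightarrow> finite (pointed_subsets U t)"
  unfolding pointed_subsets_eq_Sigma
  by (rule finite_SigmaI) (auto intro: finite_subsets_of_card finite_subset)

lemma pointed_subsets_nonempty:
  assumes "finite U" "1 \<le> t" "t \<le> card U"
  shows "pointed_subsets U t \<noteq> {}"
proof -
  obtain T where T: "T \<subseteq> U" "card T = t"
    using obtain_subset_with_card_n[OF assms(3)] by blast
  then obtain k where "k \<in> T"
    using assms(2) by fastforce
  with T show ?thesis
    by (auto simp: pointed_subsets_def)
qed

lemma card_pointed_subsets_by_subsets:
  "finite U \<Longrightarrow> card (pointed_subsets U t) = t * card {T. T \<subseteq> U \<and> card T = t}"
  unfolding pointed_subsets_eq_Sigma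
  by (subst card_SigmaI) (auto intro: finite_subset)

lemma bind_uniform_subset_uniform_point:
  assumes U: "finite U" and t: "1 \<le> t" "t \<le> card U"
  shows "bind_pmf (pmf_of_set {T. T \<subseteq> U \<and> card T = t})
           (\<lambda>T. map_pmf (\<lambda>k. (T, k)) (pmf_of_set T))
         = pmf_of_set (pointed_subsets U t)"
proof -
  define TT where "TT = {T. T \<subseteq> U \<and> card T = t}"
  have TT: "finite TT" "TT \<noteq> {}"
    using finite_subsets_of_card[OF U] pointed_subsets_nonempty[OF assms]
    by (auto simp: TT_def pointed_subsets_def)
  have member_TT: "finite T' \<and> T' \<noteq> {} \<and> card T' = t" if "T' \<in> TT" for T'
    using that t U by (auto simp: TT_def intro: finite_subset)
  show ?thesis
    unfolding TT_def[symmetric]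
  proof (rule pmf_eqI)
    fix x :: "'a set \<times> 'a"
    obtain T k where x: "x = (T, k)"
      by fastforce
    have pmf_point: "pmf (map_pmf (\<lambda>k. (T', k)) (pmf_of_set T')) (T, k)
        = (if T' = T \<and> k \<in> T then 1 / t else 0)" if "T' \<in> TT" for T'
      using member_TT[OF that] by (auto simp: pmf_map vimage_def measure_pmf_of_set)
    have "pmf (bind_pmf (pmf_of_set TT) (\<lambda>T. map_pmf (\<lambda>k. (T, k)) (pmf_of_set T))) x
        = (\<Sum>T'\<in>TT. if T' = T \<and> k \<in> T then 1 / t else 0) / card TT"
      using TT pmf_point by (simp add: x pmf_bind_pmf_of_set)
    also have "\<dots> = indicator (pointed_subsets U t) x / (t * card TT)"
      using TT(1) by (cases "k \<in> T") (auto simp: x TT_def pointed_subsets_def)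
    also have "\<dots> = pmf (pmf_of_set (pointed_subsets U t)) x"
      using finite_pointed_subsets[OF U] pointed_subsets_nonempty[OF assms]
      by (simp add: card_pointed_subsets_by_subsets[OF U] TT_def)
    finally show "pmf (bind_pmf (pmf_of_set TT) (\<lambda>T. map_pmf (\<lambda>k. (T, k)) (pmf_of_set T))) x
        = pmf (pmf_of_set (pointed_subsets U t)) x" .
  qed
qed

lemma bij_betw_reroot_pointed_subsets:
  assumes "finite U" "1 \<le> t"
  shows "bij_betw (\<lambda>(k, S). (insert k S, k))
           (SIGMA k:U. {S. S \<subseteq> U - {k} \<and> card S = t - 1}) (pointed_subsets U t)"
proof (rule bij_betw_byWitness[where f' = "\<lambda>(T, k). (k, T - {k})"])
  have fin: "finite S" if "S \<subseteq> U" for S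
    using assms(1) that by (rule rev_finite_subset)
  have "card (insert k S) = t" if "S \<subseteq> U - {k}" "card S = t - 1" for k S
    using that assms(2) fin[of S] by (subst card_insert_disjoint) auto
  then show "(\<lambda>(k, S). (insert k S, k)) ` (SIGMA k:U. {S. S \<subseteq> U - {k} \<and> card S = t - 1})
      \<subseteq> pointed_subsets U t"
    by (auto simp: pointed_subsets_def)
  show "(\<lambda>(T, k). (k, T - {k})) ` pointed_subsets U t
      \<subseteq> (SIGMA k:U. {S. S \<subseteq> U - {k} \<and> card S = t - 1})"
    using fin by (auto simp: pointed_subsets_def)
qed (auto simp: pointed_subsets_def)

lemma card_pointed_subsets_Int:
  assumes "finite U" "1 \<le> t"
  shows "card (pointed_subsets U t \<inter> E)
       = (\<Sum>k\<in>U. card {S. S \<subseteq> U - {k} \<and> card S = t - 1 \<and> (insert k S, k) \<in> E})"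
proof -
  let ?f = "\<lambda>(k, S). (insert k S, k)"
  have "bij_betw ?f {p \<in> SIGMA k:U. {S. S \<subseteq> U - {k} \<and> card S = t - 1}. ?f p \<in> E}
      {q \<in> pointed_subsets U t. q \<in> E}"
    by (rule bij_betw_Collect[OF bij_betw_reroot_pointed_subsets[OF assms]]) simp
  moreover have "{p \<in> SIGMA k:U. {S. S \<subseteq> U - {k} \<and> card S = t - 1}. ?f p \<in> E}
      = (SIGMA k:U. {S. S \<subseteq> U - {k} \<and> card S = t - 1 \<and> (insert k S, k) \<in> E})"
    by auto
  ultimately have "card (pointed_subsets U t \<inter> E)
      = card (SIGMA k:U. {S. S \<subseteq> U - {k} \<and> card S = t - 1 \<and> (insert k S, k) \<in> E})"
    by (simp add: bij_betw_same_card Int_def)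
  also have "\<dots> = (\<Sum>k\<in>U. card {S. S \<subseteq> U - {k} \<and> card S = t - 1 \<and> (insert k S, k) \<in> E})"
    using assms(1) by (intro card_SigmaI) (auto intro: rev_finite_subset[of "Pow U"])
  finally show ?thesis .
qed

lemma card_pointed_subsets_by_points:
  assumes "finite U" "1 \<le> t"
  shows "card (pointed_subsets U t) = card U * (card U - 1 choose (t - 1))"
proof -
  have "card (pointed_subsets U t) = (\<Sum>k\<in>U. card {S. S \<subseteq> U - {k} \<and> card S = t - 1})"
    using card_pointed_subsets_Int[OF assms, of UNIV] by simp
  also have "\<dots> = (\<Sum>k\<in>U. card U - 1 choose (t - 1))"
    using assms(1) by (intro sum.cong) (simp_all add: n_subsets)
  finally show ?thesis
    by simp
qed

lemma card_subsets_Int_sizes: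
  assumes U: "finite U" and AB: "A \<subseteq> U" "B \<subseteq> U" "A \<inter> B = {}" and x: "x1 + x2 \<le> s"
  shows "card {S. S \<subseteq> U \<and> card S = s \<and> card (S \<inter> A) = x1 \<and> card (S \<inter> B) = x2}
       = (card A choose x1) * (card B choose x2) * (card (U - A - B) choose (s - x1 - x2))"
proof -
  let ?L = "{S. S \<subseteq> U \<and> card S = s \<and> card (S \<inter> A) = x1 \<and> card (S \<inter> B) = x2}"
  let ?R = "{P. P \<subseteq> A \<and> card P = x1} \<times> {Q. Q \<subseteq> B \<and> card Q = x2}
      \<times> {R. R \<subseteq> U - A - B \<and> card R = s - x1 - x2}"
  have card_split: "card S = card (S \<inter> A) + card (S \<inter> B) + card (S - A - B)" if "S \<subseteq> U" for S
  proof -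
    have fin: "finite S"
      using U that by (rule rev_finite_subset)
    have "card S = card ((S \<inter> A) \<union> (S \<inter> B)) + card (S - A - B)"
      using fin by (subst card_Un_disjoint[symmetric]) (auto intro: arg_cong[where f = card])
    also have "card ((S \<inter> A) \<union> (S \<inter> B)) = card (S \<inter> A) + card (S \<inter> B)"
      using fin AB by (intro card_Un_disjoint) auto
    finally show ?thesis .
  qed
  have "bij_betw (\<lambda>S. (S \<inter> A, S \<inter> B, S - A - B)) ?L ?R"
  proof (rule bij_betw_byWitness[where f' = "\<lambda>(P, Q, R). P \<union> Q \<union> R"])
    show "(\<lambda>S. (S \<inter> A, S \<inter> B, S - A - B)) ` ?L \<subseteq> ?R"
      using card_split by auto
    have union_mem: "P \<union> Q \<union> R \<in> ?L" if "(P, Q, R) \<in> ?R" for P Q R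
    proof -
      have parts: "(P \<union> Q \<union> R) \<inter> A = P" "(P \<union> Q \<union> R) \<inter> B = Q" "(P \<union> Q \<union> R) - A - B = R"
        using that AB by auto
      have "P \<union> Q \<union> R \<subseteq> U"
        using that AB by auto
      with card_split[OF this] parts that x show ?thesis
        by simp
    qed
    show "(\<lambda>(P, Q, R). P \<union> Q \<union> R) ` ?R \<subseteq> ?L"
    proof (rule image_subsetI)
      fix p assume "p \<in> ?R"
      moreover obtain P Q R where "p = (P, Q, R)"
        by (cases p)
      ultimately show "(\<lambda>(P, Q, R). P \<union> Q \<union> R) p \<in> ?L"
        using union_mem by (simp only: case_prod_conv)
    qed
  qed (use AB in auto)
  then have "card ?L = card ?R"
    by (rule bij_betw_same_card)
  also have "\<dots> = (card A choose x1) * (card B choose x2) * (card (U - A - B) choose (s - x1 - x2))"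
    using U AB by (simp add: card_cartesian_product n_subsets finite_subset)
  finally show ?thesis .
qed

lemma card_pointed_subsets_Int_sizes:
  assumes U: "finite U" and t: "1 \<le> t"
    and A: "\<And>k. k \<in> U \<Longrightarrow> A k \<subseteq> U - {k}" and B: "\<And>k. k \<in> U \<Longrightarrow> B k \<subseteq> U - {k}"
    and disjoint: "\<And>k. k \<in> U \<Longrightarrow> A k \<inter> B k = {}"
    and card_A: "\<And>k. k \<in> U \<Longrightarrow> card (A k) = a" and card_B: "\<And>k. k \<in> U \<Longrightarrow> card (B k) = b"
    and x: "x1 + x2 \<le> t - 1"
  shows "card (pointed_subsets U t \<inter> {(T, k). card (T \<inter> A k) = x1 \<and> card (T \<inter> B k) = x2})
       = card U * ((a choose x1) * (b choose x2) * ((card U - 1 - a - b) choose (t - 1 - x1 - x2)))"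
proof -
  have "card {S. S \<subseteq> U - {k} \<and> card S = t - 1 \<and>
        (insert k S, k) \<in> {(T, k). card (T \<inter> A k) = x1 \<and> card (T \<inter> B k) = x2}}
      = (a choose x1) * (b choose x2) * ((card U - 1 - a - b) choose (t - 1 - x1 - x2))"
    if k: "k \<in> U" for k
  proof -
    have "{S. S \<subseteq> U - {k} \<and> card S = t - 1 \<and>
          (insert k S, k) \<in> {(T, k). card (T \<inter> A k) = x1 \<and> card (T \<inter> B k) = x2}}
        = {S. S \<subseteq> U - {k} \<and> card S = t - 1 \<and> card (S \<inter> A k) = x1 \<and> card (S \<inter> B k) = x2}"
      using A[OF k] B[OF k] by (auto simp: Int_insert_left)
    moreover have "card (U - {k} - A k - B k) = card U - 1 - a - b"
    proof -
      have fin: "finite (A k)" "finite (B k)"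
        using U A[OF k] B[OF k] by (auto intro: finite_subset)
      have "card (U - {k} - A k - B k) = card (U - {k}) - card (A k \<union> B k)"
        using fin A[OF k] B[OF k] by (subst card_Diff_subset[symmetric]) (auto intro: arg_cong[where f = card])
      also have "card (A k \<union> B k) = a + b"
        using fin disjoint[OF k] card_A[OF k] card_B[OF k] by (simp add: card_Un_disjoint)
      finally show ?thesis
        using U k by simp
    qed
    ultimately show ?thesis
      using card_subsets_Int_sizes[of "U - {k}" "A k" "B k" x1 x2 "t - 1"] U A[OF k] B[OF k]
        disjoint[OF k] card_A[OF k] card_B[OF k] x
      by simp
  qed
  then show ?thesis
    by (simp add: card_pointed_subsets_Int[OF U t])
qed

lemma ex_nth_less_0_3: "(\<exists>i<length [x, y, z]. [x, y, z] ! i < (0::int)) \<longleftrightarrow> x < 0 \<or> y < 0 \<or> z < 0"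
  by (simp add: numeral_3_eq_3 less_Suc_eq ex_disj_distrib conj_disj_distribR)

lemma hypgeom3_of_nat:
  "hypgeom [int a, int b, int c] [int x, int y, int z]
     = real (a choose x) * real (b choose y) * real (c choose z) / real (a + b + c choose (x + y + z))"
  unfolding hypgeom_def ex_nth_less_0_3
  by (simp add: numeral_3_eq_3 lessThan_Suc mult_ac add_ac flip: of_nat_add)

lemma hypgeom3_eq_0: "x < 0 \<or> y < 0 \<or> z < 0 \<Longrightarrow> hypgeom X [x, y, z] = 0"
  unfolding hypgeom_def ex_nth_less_0_3 by simp

lemma hypgeom_drop_empty_colour: "hypgeom [A, 0, C] [x, 0, y] = hypgeom [A, C] [x, y]"
  by (simp add: hypgeom_def numeral_3_eq_3 lessThan_Suc less_Suc_eq ex_disj_distrib conj_disj_distribR)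

lemma prob_pointed_subsets_Int_sizes:
  assumes U: "finite U" and t: "1 \<le> t" "t \<le> card U"
    and A: "\<And>k. k \<in> U \<Longrightarrow> A k \<subseteq> U - {k}" and B: "\<And>k. k \<in> U \<Longrightarrow> B k \<subseteq> U - {k}"
    and disjoint: "\<And>k. k \<in> U \<Longrightarrow> A k \<inter> B k = {}"
    and card_A: "\<And>k. k \<in> U \<Longrightarrow> card (A k) = a" and card_B: "\<And>k. k \<in> U \<Longrightarrow> card (B k) = b"
  shows "measure_pmf.prob (pmf_of_set (pointed_subsets U t))
           {(T, k). int (card (T \<inter> A k)) = x1 \<and> int (card (T \<inter> B k)) = x2}
       = hypgeom [int a, int b, int (card U) - 1 - int a - int b] [x1, x2, int t - 1 - x1 - x2]"
proof -
  let ?P = "pointed_subsets U t"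
  have P: "finite ?P" "?P \<noteq> {}"
    using finite_pointed_subsets[OF U] pointed_subsets_nonempty[OF U t] .
  have fin: "finite S" if "S \<subseteq> U" for S
    using U that by (rule rev_finite_subset)
  have Un_le: "card (S \<inter> A k) + card (S \<inter> B k) \<le> card (S - {k})" if "k \<in> U" "S \<subseteq> U" for S k
  proof -
    have "card (S \<inter> A k) + card (S \<inter> B k) = card ((S \<inter> A k) \<union> (S \<inter> B k))"
      using that fin disjoint by (subst card_Un_disjoint) auto
    also have "\<dots> \<le> card (S - {k})"
      using that fin A[OF that(1)] B[OF that(1)] by (intro card_mono) auto
    finally show ?thesis .
  qed
  have sizes: "card (T \<inter> A k) + card (T \<inter> B k) \<le> t - 1" if "(T, k) \<in> ?P" for T k
  proof -
    have "T \<subseteq> U" "k \<in> T" "card T = t"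
      using that by (auto simp: pointed_subsets_def)
    then show ?thesis
      using Un_le[of k T] fin[of T] by auto
  qed
  show ?thesis
  proof (cases "x1 < 0 \<or> x2 < 0 \<or> int t - 1 - x1 - x2 < 0")
    case True
    have "?P \<inter> {(T, k). int (card (T \<inter> A k)) = x1 \<and> int (card (T \<inter> B k)) = x2} = {}"
      using True sizes t(1) by fastforce
    then show ?thesis
      using True P by (simp add: measure_pmf_of_set hypgeom3_eq_0)
  next
    case False
    define m1 m2 where "m1 = nat x1" and "m2 = nat x2"
    have m: "x1 = int m1" "x2 = int m2" "m1 + m2 \<le> t - 1"
      using False t(1) by (auto simp: m1_def m2_def)
    obtain k where k: "k \<in> U"
      using t by fastforce
    have "U \<inter> A k = A k" "U \<inter> B k = B k"
      using A[OF k] B[OF k] by auto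
    then have ab: "a + b \<le> card U - 1"
      using Un_le[OF k order_refl] card_A[OF k] card_B[OF k] U k by simp
    have "?P \<inter> {(T, k). int (card (T \<inter> A k)) = x1 \<and> int (card (T \<inter> B k)) = x2}
        = ?P \<inter> {(T, k). card (T \<inter> A k) = m1 \<and> card (T \<inter> B k) = m2}"
      using m by auto
    then have "measure_pmf.prob (pmf_of_set ?P)
          {(T, k). int (card (T \<inter> A k)) = x1 \<and> int (card (T \<inter> B k)) = x2}
        = card (?P \<inter> {(T, k). card (T \<inter> A k) = m1 \<and> card (T \<inter> B k) = m2}) / card ?P"
      using P by (simp add: measure_pmf_of_set)
    also have "\<dots> = real (card U * ((a choose m1) * (b choose m2) * ((card U - 1 - a - b) choose (t - 1 - m1 - m2))))
          / real (card U * (card U - 1 choose (t - 1)))"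
      by (simp only: card_pointed_subsets_by_points[OF U t(1)]
          card_pointed_subsets_Int_sizes[OF U t(1) A B disjoint card_A card_B m(3)])
    also have "\<dots> = real (a choose m1) * real (b choose m2) * real ((card U - 1 - a - b) choose (t - 1 - m1 - m2))
          / real (card U - 1 choose (t - 1))"
      using k U unfolding of_nat_mult by (subst mult_divide_mult_cancel_left) auto
    also have "\<dots> = hypgeom [int a, int b, int (card U - 1 - a - b)] [int m1, int m2, int (t - 1 - m1 - m2)]"
    proof -
      have "a + b + (card U - 1 - a - b) = card U - 1" "m1 + m2 + (t - 1 - m1 - m2) = t - 1"
        using ab m(3) by auto
      then show ?thesis
        by (simp only: hypgeom3_of_nat)
    qed
    also have "\<dots> = hypgeom [int a, int b, int (card U) - 1 - int a - int b] [x1, x2, int t - 1 - x1 - x2]"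
    proof -
      have "int (card U - 1 - a - b) = int (card U) - 1 - int a - int b"
        "int (t - 1 - m1 - m2) = int t - 1 - x1 - x2"
        using ab m t by arith+
      then show ?thesis
        by (simp only: m)
    qed
    finally show ?thesis .
  qed
qed

lemma measure_pmf_cong_set_pmf:
  "A \<inter> set_pmf p = B \<inter> set_pmf p \<Longrightarrow> measure_pmf.prob p A = measure_pmf.prob p B"
  by (metis measure_Int_set_pmf)

lemma rand_exp_eq_pmf_of_set:
  "1 \<le> t \<Longrightarrow> t \<le> 2 ^ n \<Longrightarrow> rand_exp n t = pmf_of_set (pointed_subsets (cube n) t)"
  unfolding rand_exp_def
  by (rule bind_uniform_subset_uniform_point) (simp_all add: finite_cube card_cube)

lemma set_pmf_rand_exp:
  assumes "1 \<le> t" "t \<le> 2 ^ n"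
  shows "set_pmf (rand_exp n t) = pointed_subsets (cube n) t"
  using finite_pointed_subsets[OF finite_cube] pointed_subsets_nonempty[OF finite_cube, of t n] assms
  by (simp add: rand_exp_eq_pmf_of_set card_cube)

definition hamming_sphere :: "nat \<Rightarrow> bool list \<Rightarrow> nat \<Rightarrow> bool list set" where
  "hamming_sphere n k d = {z \<in> cube n. hamming z k = d}"

lemma card_hamming_sphere:
  assumes "k \<in> cube n"
  shows "card (hamming_sphere n k d) = n choose d"
proof -
  let ?flips = "\<lambda>z. {i. i < n \<and> z ! i \<noteq> k ! i}"
  let ?flip = "\<lambda>D. map (\<lambda>i. (i \<in> D) \<noteq> k ! i) [0..<n]"
  have "bij_betw ?flips (hamming_sphere n k d) {D. D \<subseteq> {..<n} \<and> card D = d}"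
  proof (rule bij_betw_byWitness[where f' = ?flip])
    show "\<forall>z\<in>hamming_sphere n k d. ?flip (?flips z) = z"
      using assms by (auto simp: hamming_sphere_def cube_def intro!: nth_equalityI)
    show "?flips ` hamming_sphere n k d \<subseteq> {D. D \<subseteq> {..<n} \<and> card D = d}"
      by (auto simp: hamming_sphere_def cube_def hamming_def)
    have "hamming (?flip D) k = card D" if "D \<subseteq> {..<n}" for D
    proof -
      have "{i. i < length (?flip D) \<and> ?flip D ! i \<noteq> k ! i} = D"
        using that by auto
      then show ?thesis
        by (simp add: hamming_def)
    qed
    then show "?flip ` {D. D \<subseteq> {..<n} \<and> card D = d} \<subseteq> hamming_sphere n k d"
      by (auto simp: hamming_sphere_def cube_def)
  qed auto
  then show ?thesis
    by (simp add: bij_betw_same_card n_subsets)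
qed

lemma hamming_eq_0_iff:
  assumes "length z = length k"
  shows "hamming z k = 0 \<longleftrightarrow> z = k"
proof -
  have "hamming z k = 0 \<longleftrightarrow> (\<forall>i < length z. z ! i = k ! i)"
    by (auto simp: hamming_def)
  with assms show ?thesis
    by (auto intro: nth_equalityI)
qed

lemma hamming_sphere_0: "k \<in> cube n \<Longrightarrow> hamming_sphere n k 0 = {k}"
  by (auto simp: hamming_sphere_def cube_def hamming_eq_0_iff)

lemma hamming_sphere_subset: "0 < d \<Longrightarrow> hamming_sphere n k d \<subseteq> cube n - {k}"
  by (auto simp: hamming_sphere_def hamming_def)

lemma hamming_spheres_disjoint: "d1 \<noteq> d2 \<Longrightarrow> hamming_sphere n k d1 \<inter> hamming_sphere n k d2 = {}"
  by (auto simp: hamming_sphere_def)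

lemma cnt_eq_card_Int_hamming_sphere:
  "T \<subseteq> cube n \<Longrightarrow> cnt T k d = card (T \<inter> hamming_sphere n k d)"
  unfolding cnt_def hamming_sphere_def by (rule arg_cong[where f = card]) auto

lemma cnt_0: "T \<subseteq> cube n \<Longrightarrow> k \<in> T \<Longrightarrow> cnt T k 0 = 1"
  using hamming_sphere_0[of k n] by (auto simp: cnt_eq_card_Int_hamming_sphere Int_absorb1)

lemma P1_0:
  assumes "1 \<le> t" "t \<le> 2 ^ n"
  shows "P1 n t 0 x = (if x = 1 then 1 else 0)"
proof -
  have "P1 n t 0 x = measure_pmf.prob (rand_exp n t) (if x = 1 then UNIV else {})"
    unfolding P1_def using assms
    by (intro measure_pmf_cong_set_pmf) (auto simp: set_pmf_rand_exp pointed_subsets_def cnt_0)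
  then show ?thesis
    by simp
qed

lemma P1_eq_hypgeom:
  assumes t: "1 \<le> t" "t \<le> 2 ^ n" and d: "0 < d"
  shows "P1 n t d x = hypgeom [int (n choose d), 2 ^ n - 1 - int (n choose d)] [x, int t - 1 - x]"
proof -
  have "P1 n t d x = measure_pmf.prob (rand_exp n t)
      {(T, k). int (card (T \<inter> hamming_sphere n k d)) = x \<and> int (card (T \<inter> {})) = 0}"
    unfolding P1_def using t
    by (intro measure_pmf_cong_set_pmf)
       (auto simp: set_pmf_rand_exp pointed_subsets_def cnt_eq_card_Int_hamming_sphere)
  also have "\<dots> = hypgeom [int (n choose d), int 0, int (card (cube n)) - 1 - int (n choose d) - int 0]
      [x, 0, int t - 1 - x - 0]"
    unfolding rand_exp_eq_pmf_of_set[OF t]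
    by (rule prob_pointed_subsets_Int_sizes)
       (use t d in \<open>simp_all add: finite_cube card_cube card_hamming_sphere hamming_sphere_subset\<close>)
  finally show ?thesis
    by (simp add: card_cube hypgeom_drop_empty_colour)
qed

lemma P2_eq_hypgeom:
  assumes t: "1 \<le> t" "t \<le> 2 ^ n" and d: "0 < d1" "0 < d2" "d1 \<noteq> d2"
  shows "P2 n t d1 x1 d2 x2 = hypgeom [int (n choose d1), int (n choose d2),
      2 ^ n - 1 - int (n choose d1) - int (n choose d2)] [x1, x2, int t - 1 - x1 - x2]"
proof -
  have "P2 n t d1 x1 d2 x2 = measure_pmf.prob (rand_exp n t)
      {(T, k). int (card (T \<inter> hamming_sphere n k d1)) = x1 \<and>
               int (card (T \<inter> hamming_sphere n k d2)) = x2}"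
    unfolding P2_def using t
    by (intro measure_pmf_cong_set_pmf)
       (auto simp: set_pmf_rand_exp pointed_subsets_def cnt_eq_card_Int_hamming_sphere)
  also have "\<dots> = hypgeom [int (n choose d1), int (n choose d2),
      int (card (cube n)) - 1 - int (n choose d1) - int (n choose d2)] [x1, x2, int t - 1 - x1 - x2]"
    unfolding rand_exp_eq_pmf_of_set[OF t]
    by (rule prob_pointed_subsets_Int_sizes)
       (use t d in \<open>simp_all add: finite_cube card_cube card_hamming_sphere hamming_sphere_subset
          hamming_spheres_disjoint\<close>)
  finally show ?thesis
    by (simp add: card_cube)
qed

lemma P2_0:
  assumes "1 \<le> t" "t \<le> 2 ^ n"
  shows "P2 n t 0 x1 d x2 = P1 n t 0 x1 * P1 n t d x2"
proof -
  have "P2 n t 0 x1 d x2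
      = measure_pmf.prob (rand_exp n t) (if x1 = 1 then {(T, k). int (cnt T k d) = x2} else {})"
    unfolding P2_def using assms
    by (intro measure_pmf_cong_set_pmf) (auto simp: set_pmf_rand_exp pointed_subsets_def cnt_0)
  then show ?thesis
    using P1_0[OF assms, of x1] unfolding P1_def[of n t d x2] by simp
qed

lemma P2_commute: "P2 n t d1 x1 d2 x2 = P2 n t d2 x2 d1 x1"
  by (simp add: P2_def conj_commute)

lemma P2_same_radius: "P2 n t d x1 d x2 = (if x1 = x2 then P1 n t d x1 else 0)"
proof (cases "x1 = x2")
  case False
  then have empty: "{(T, k). int (cnt T k d) = x1 \<and> int (cnt T k d) = x2} = {}"
    by auto
  show ?thesis
    unfolding P2_def empty using False by simp
qed (simp add: P2_def P1_def)

theorem lemma3: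
  fixes n t d d1 d2 :: nat and x x1 x2 :: int
  assumes "1 \<le> t" and "t \<le> 2 ^ n"
    and "d \<le> n" and "d1 \<le> n" and "d2 \<le> n"
  shows "(P1 n t d x =
           (if d = 0 \<and> x = 1 then 1
            else if d = 0 \<and> x \<noteq> 1 then 0
            else hypgeom [int (n choose d), 2 ^ n - 1 - int (n choose d)]
                         [x, int t - 1 - x])) \<and>
         (P2 n t d1 x1 d2 x2 =
           (if d1 = 0 \<or> d2 = 0 then P1 n t d1 x1 * P1 n t d2 x2
            else if d1 = d2 \<and> x1 = x2 then P1 n t d1 x1
            else if d1 = d2 \<and> x1 \<noteq> x2 then 0
            else hypgeom [int (n choose d1), int (n choose d2),
                          2 ^ n - 1 - int (n choose d1) - int (n choose d2)]
                         [x1, x2, int t - 1 - x1 - x2]))"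
proof -
  note t = assms(1,2)
  have "P2 n t d1 x1 d2 x2 = P1 n t d1 x1 * P1 n t d2 x2" if "d1 = 0 \<or> d2 = 0"
    using that P2_0[OF t] P2_commute by (metis mult.commute)
  then show ?thesis
    using P1_0[OF t] P1_eq_hypgeom[OF t] P2_same_radius P2_eq_hypgeom[OF t] by auto
qed

end
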